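(* Each of the following real polynomial systems has an isochronous center at the origin $O$, with the indicated Urabe function $h$: (i) $\dot x=-y+xy-\frac12x^{2}y+\frac18x^{3}y$, $\dot y=x-\frac34x^{2}+\frac14y^{2}+\frac{5}{24}x^{3}+\frac38xy^{2}-\frac1{16}x^{2}y^{2}-\frac1{48}x^{4}$, with $h(\xi)=\dfrac{3\xi}{\sqrt{16+9\xi^{2}}}$; (ii) $\dot x=-y+xy+9x^{2}y+6x^{3}y$, $\dot y=x+\frac32x^{2}-\frac12y^{2}+x^{3}+12xy^{2}+12x^{2}y^{2}+\frac12x^{4}$, with $h(\xi)=-\dfrac{\xi}{\sqrt{4+49\xi^{2}}}$; (iii) for every $a_{3,1}\in\mathbb R$: $\dot x=-y+xy-\left(3a_{3,1}+\frac29\right)x^{2}y+a_{3,1}x^{3}y$, $\dot y=x+\left(\frac19-3a_{3,1}\right)xy^{2}$, with $h(\xi)=\dfrac{\xi}{\sqrt{(1-27a_{3,1})\xi^{2}+9}}$; (iv) $\dot x=-y+xy$, $\dot y=x-\frac32x^{2}+y^{2}+x^{3}-\frac14x^{4}$, with $h(\xi)=\dfrac{\xi}{\sqrt{1+\xi^{2}}}$.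
   Context: For a real planar polynomial system $\dot x=-y+A(x,y)$, $\dot y=x+B(x,y)$, with $A,B$ polynomials having no terms of degree $<2$, the origin $O$ is a center if there is a punctured neighborhood of $O$ in which every orbit is a closed orbit surrounding $O$; it is an isochronous center if moreover all these closed orbits have the same period. Urabe function: consider a system $\dot x=p_0(x)+p_1(x)y$, $\dot y=q_0(x)+q_1(x)y+q_2(x)y^2$ with $p_i,q_i$ real polynomials, $p_0(0)=q_0(0)=0$, $p_1(0)\neq0$, and such that $-\frac{p_1'p_0}{p_1}+q_1+p_0'-\frac{2q_2p_0}{p_1}\equiv0$ (this holds automatically when $p_0\equiv q_1\equiv0$). Put $f=-\frac{q_2+p_1'}{p_1}$, $g=-\frac{q_2p_0^2}{p_1}+q_1p_0-p_1q_0$; the change of variables $z=p_0(x)+p_1(x)y$ transforms the system into $\dot x=z$, $\dot z=-g(x)-f(x)z^2$. Let $F(x)=\int_0^xf(s)\,ds$ and let $\xi$ be defined near $0$ by $\frac12\xi(x)^2=\int_0^xg(s)e^{2F(s)}ds$ with $x\xi(x)>0$ for $x\ne0$. When $O$ is an isochronous center, its Urabe function is the odd real-analytic function $h$ defined near $0$ satisfying $\dfrac{\xi(x)}{1+h(\xi(x))}=g(x)e^{F(x)}$ for $x$ near $0$. Here all systems have $p_0\equiv q_1\equiv0$. *)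

theory Defs
  imports "HOL-Analysis.Analysis" "HOL-Computational_Algebra.Polynomial"
begin

type_synonym vfield = "real \<times> real \<Rightarrow> real \<times> real"

definition closed_orbit_through :: "vfield \<Rightarrow> (real \<Rightarrow> real \<times> real) \<Rightarrow> real \<times> real \<Rightarrow> real \<Rightarrow> bool" where
  "closed_orbit_through V phi p T \<longleftrightarrow>
     T > 0 \<and> phi 0 = p \<and>
     (\<forall>t. (phi has_vector_derivative V (phi t)) (at t)) \<and>
     (\<forall>t. phi (t + T) = phi t) \<and>
     (\<forall>s. 0 < s \<and> s < T \<longrightarrow> phi s \<noteq> p) \<and>
     (0, 0) \<in> inside (range phi)"

definition is_center :: "vfield \<Rightarrow> bool" where
  "is_center V \<longleftrightarrow> (\<exists>U. open U \<and> (0, 0) \<in> U \<and>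
     (\<forall>p \<in> U - {(0, 0)}. \<exists>phi T. closed_orbit_through V phi p T))"

definition is_isochronous_center :: "vfield \<Rightarrow> bool" where
  "is_isochronous_center V \<longleftrightarrow> is_center V \<and> (\<exists>U T. open U \<and> (0, 0) \<in> U \<and>
     (\<forall>p \<in> U - {(0, 0)}. \<exists>phi. closed_orbit_through V phi p T))"

definition oint :: "real \<Rightarrow> real \<Rightarrow> (real \<Rightarrow> real) \<Rightarrow> real" where
  "oint a b f = (if a \<le> b then integral {a..b} f else - integral {b..a} f)"

definition odd_analytic_near_0 :: "(real \<Rightarrow> real) \<Rightarrow> bool" where
  "odd_analytic_near_0 h \<longleftrightarrow> (\<exists>r > 0. \<exists>c :: nat \<Rightarrow> real.
     \<forall>s. \<bar>s\<bar> < r \<longrightarrow> h (- s) = - h s \<and> (\<lambda>n. c n * s ^ n) sums h s)"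

definition urabe_function :: "vfield \<Rightarrow> (real \<Rightarrow> real) \<Rightarrow> bool" where
  "urabe_function V h \<longleftrightarrow> is_isochronous_center V \<and> odd_analytic_near_0 h \<and>
    (\<exists>p0 p1 q0 q1 q2 :: real poly.
      (\<forall>x y. V (x, y) = (poly p0 x + poly p1 x * y,
                          poly q0 x + poly q1 x * y + poly q2 x * y ^ 2)) \<and>
      poly p0 0 = 0 \<and> poly q0 0 = 0 \<and> poly p1 0 \<noteq> 0 \<and>
      (\<forall>x. poly p1 x \<noteq> 0 \<longrightarrow>
         - poly (pderiv p1) x * poly p0 x / poly p1 x + poly q1 x + poly (pderiv p0) x
         - 2 * poly q2 x * poly p0 x / poly p1 x = 0) \<and>
      (let f = (\<lambda>x. - (poly q2 x + poly (pderiv p1) x) / poly p1 x);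
           g = (\<lambda>x. - poly q2 x * (poly p0 x)\<^sup>2 / poly p1 x + poly q1 x * poly p0 x
                    - poly p1 x * poly q0 x);
           F = (\<lambda>x. oint 0 x f)
       in \<exists>\<delta> > 0. \<exists>\<xi> :: real \<Rightarrow> real. \<forall>x. \<bar>x\<bar> < \<delta> \<longrightarrow>
            (\<xi> x)\<^sup>2 / 2 = oint 0 x (\<lambda>s. g s * exp (2 * F s)) \<and>
            (x \<noteq> 0 \<longrightarrow> x * \<xi> x > 0) \<and>
            \<xi> x / (1 + h (\<xi> x)) = g x * exp (F x)))"

end

theory Submission
  imports Defs
begin

(* With p0 = q1 = 0 the system reads x' = p1(x) y, y' = q0(x) + q2(x) y^2.  In the coordinates
   a = \<xi>(x), b = p1(x) y e^F(x) it becomes the rescaled rotation a' = b / (1 + h a),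
   b' = - a / (1 + h a): the identity \<xi>' (1 + h \<xi>) = e^F gives the a-equation and the Urabe
   relation \<xi> / (1 + h \<xi>) = g e^F the b-equation.  Its orbits are the circles a^2 + b^2 = r^2,
   traversed with angular speed 1 / (1 + h(r cos \<beta>)); since h is odd, one revolution takes the
   integral of 1 + h(r cos \<beta>) over a period, i.e. 2 pi. *)

lemma oint_eq_diff_antiderivative:
  fixes G k :: "real \<Rightarrow> real"
  assumes "\<And>s. \<bar>s\<bar> < \<delta> \<Longrightarrow> (G has_real_derivative k s) (at s)" and "\<bar>x\<bar> < \<delta>"
  shows "oint 0 x k = G x - G 0"
proof -
  have deriv: "(G has_vector_derivative k s) (at s within S)" if "\<bar>s\<bar> < \<delta>" for s S
    using assms(1)[OF that] has_real_derivative_iff_has_vector_derivative has_vector_derivative_at_within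
    by blast
  show ?thesis
  proof (cases "0 \<le> x")
    case True
    have "(k has_integral (G x - G 0)) {0..x}"
      by (rule fundamental_theorem_of_calculus[OF True]) (use assms(2) in \<open>auto intro!: deriv\<close>)
    then show ?thesis using True by (simp add: oint_def integral_unique)
  next
    case False
    have "(k has_integral (G 0 - G x)) {x..0}"
      by (rule fundamental_theorem_of_calculus) (use assms(2) False in \<open>auto intro!: deriv\<close>)
    then show ?thesis using False by (simp add: oint_def integral_unique)
  qed
qed

lemma odd_analytic_near_0_linear_over_sqrt:
  fixes m c k :: real
  assumes k: "k > 0"
  shows "odd_analytic_near_0 (\<lambda>s. m * s / sqrt (c * s^2 + k))"
proof -
  define r where "r = sqrt (k / (\<bar>c\<bar> + 1))"
  define a where "a j = (if odd j then m / sqrt k * ((-1/2) gchoose (j div 2)) * (c/k)^(j div 2) else 0)"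
    for j :: nat
  have "(\<lambda>n. a n * s^n) sums (m * s / sqrt (c * s^2 + k))" if s: "\<bar>s\<bar> < r" for s
  proof -
    define z where "z = c * s^2 / k"
    have "(\<bar>c\<bar> + 1) * s^2 < k"
      using power_strict_mono[OF s, of 2] k by (simp add: r_def field_simps)
    moreover have "\<bar>c\<bar> * s^2 \<le> (\<bar>c\<bar> + 1) * s^2"
      by (simp add: algebra_simps)
    ultimately have "\<bar>c\<bar> * s^2 < k"
      by linarith
    then have z: "\<bar>z\<bar> < 1"
      using k by (simp add: z_def abs_mult)
    have "sqrt (c * s^2 + k) = sqrt k * sqrt (1 + z)"
      using k by (simp add: z_def field_simps flip: real_sqrt_mult)
    moreover have "(\<lambda>n. ((-1/2) gchoose n) * z^n) sums (1 / sqrt (1 + z))"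
      using gen_binomial_real[OF z, where a = "-1/2"] z
      by (simp add: powr_minus_divide powr_half_sqrt)
    then have "(\<lambda>n. (m / sqrt k * s) * (((-1/2) gchoose n) * z^n)) sums (m / sqrt k * s * (1 / sqrt (1 + z)))"
      by (rule sums_mult)
    moreover have "(\<lambda>n. a (2*n+1) * s^(2*n+1)) = (\<lambda>n. (m / sqrt k * s) * (((-1/2) gchoose n) * z^n))"
      by (simp add: a_def z_def power_mult_distrib power_mult field_simps power2_eq_square)
    ultimately have "(\<lambda>n. a (2*n+1) * s^(2*n+1)) sums (m * s / sqrt (c * s^2 + k))"
      by simp
    moreover have "strict_mono (\<lambda>n::nat. 2*n+1)"
      by (rule strict_monoI) simp
    moreover have "a n * s^n = 0" if "n \<notin> range (\<lambda>n. 2*n+1)" for n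
      using that oddE[of n] by (auto simp: a_def)
    ultimately show ?thesis
      using sums_mono_reindex[of "\<lambda>n. 2*n+1" "\<lambda>n. a n * s^n"] by blast
  qed
  moreover have "r > 0" using k by (simp add: r_def)
  ultimately show ?thesis
    unfolding odd_analytic_near_0_def by (intro exI[of _ r] conjI exI[of _ a] allI impI) simp_all
qed

lemma antiderivative_shift_2pi:
  fixes g G :: "real \<Rightarrow> real"
  assumes G: "\<And>\<beta>. (G has_real_derivative g \<beta>) (at \<beta>)"
    and periodic: "\<And>\<beta>. g (\<beta> + 2*pi) = g \<beta>"
    and even: "\<And>\<beta>. g (- \<beta>) = g \<beta>"
    and skew: "\<And>\<beta>. g (pi - \<beta>) = - g \<beta>"
  shows "G (\<beta> + 2*pi) = G \<beta>"
proof -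
  have "G (pi - \<beta>) - G \<beta> = G (pi - 0) - G 0" for \<beta>
  proof (rule DERIV_isconst_all[where f = "\<lambda>\<beta>. G (pi - \<beta>) - G \<beta>"], intro allI)
    fix x
    have "((\<lambda>\<beta>. G (pi - \<beta>)) has_real_derivative g (pi - x) * (-1)) (at x)"
      by (rule DERIV_chain2[OF G]) (auto intro!: derivative_eq_intros)
    from DERIV_diff[OF this G[of x]]
    show "((\<lambda>\<beta>. G (pi - \<beta>) - G \<beta>) has_real_derivative 0) (at x)"
      using skew[of x] by simp
  qed
  from this[of pi] have G_pi: "G pi = G 0" by simp
  have "G (- \<beta>) + G \<beta> = G (- 0) + G 0" for \<beta>
  proof (rule DERIV_isconst_all[where f = "\<lambda>\<beta>. G (- \<beta>) + G \<beta>"], intro allI)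
    fix x
    have "((\<lambda>\<beta>. G (- \<beta>)) has_real_derivative g (- x) * (-1)) (at x)"
      by (rule DERIV_chain2[OF G]) (auto intro!: derivative_eq_intros)
    from DERIV_add[OF this G[of x]]
    show "((\<lambda>\<beta>. G (- \<beta>) + G \<beta>) has_real_derivative 0) (at x)"
      using even[of x] by simp
  qed
  from this[of pi] G_pi have G_minus_pi: "G (- pi) = G 0" by simp
  have "G (\<beta> + 2*pi) - G \<beta> = G (- pi + 2*pi) - G (- pi)"
  proof (rule DERIV_isconst_all[where f = "\<lambda>\<beta>. G (\<beta> + 2*pi) - G \<beta>"], intro allI)
    fix x
    have "((\<lambda>\<beta>. G (\<beta> + 2*pi)) has_real_derivative g (x + 2*pi) * 1) (at x)"
      by (rule DERIV_chain2[OF G]) (auto intro!: derivative_eq_intros)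
    from DERIV_diff[OF this G[of x]]
    show "((\<lambda>\<beta>. G (\<beta> + 2*pi) - G \<beta>) has_real_derivative 0) (at x)"
      using periodic[of x] by simp
  qed
  then show ?thesis using G_pi G_minus_pi by simp
qed

lemma surj_if_shift_by_period:
  fixes K :: "real \<Rightarrow> real"
  assumes cont: "continuous_on UNIV K" and T: "T > 0" and shift: "\<And>\<beta>. K (\<beta> + T) = K \<beta> + T"
  shows "surj K"
proof -
  have shift_nat: "K (\<beta> + real n * T) = K \<beta> + real n * T" for \<beta> n
  proof (induction n)
    case (Suc n)
    then show ?case using shift[of "\<beta> + real n * T"] by (simp add: algebra_simps)
  qed simp
  have "\<exists>\<beta>. K \<beta> = t" for t
  proof -
    obtain n :: nat where n: "\<bar>t - K 0\<bar> \<le> real n * T"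
      using reals_Archimedean3[OF T] by (meson less_imp_le)
    have "K (- (real n * T)) = K 0 - real n * T"
      using shift_nat[of "- (real n * T)" n] by simp
    moreover have "K (real n * T) = K 0 + real n * T"
      using shift_nat[of 0 n] by simp
    ultimately show ?thesis
      using IVT'[of K "- (real n * T)" t "real n * T"] n cont
      by (force intro: continuous_on_subset)
  qed
  then show ?thesis by (metis surjI)
qed

lemma has_real_derivative_inverse_on_open:
  fixes f f' :: "real \<Rightarrow> real"
  assumes S: "open S"
    and deriv: "\<And>x. x \<in> S \<Longrightarrow> (f has_real_derivative f' x) (at x)"
    and nonzero: "\<And>x. x \<in> S \<Longrightarrow> f' x \<noteq> 0"
    and inj: "inj_on f S"
  obtains g where "open (f ` S)" "\<And>x. x \<in> S \<Longrightarrow> g (f x) = x" "\<And>y. y \<in> f ` S \<Longrightarrow> g y \<in> S"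
    "\<And>y. y \<in> f ` S \<Longrightarrow> f (g y) = y"
    "\<And>y. y \<in> f ` S \<Longrightarrow> (g has_real_derivative inverse (f' (g y))) (at y)"
proof -
  have cont: "continuous_on S f"
    using deriv by (meson DERIV_continuous continuous_at_imp_continuous_on)
  obtain g where g: "homeomorphism S (f ` S) f g"
    using invariance_of_domain_homeomorphism[OF S cont _ inj] by auto
  have open_image: "open (f ` S)"
    by (rule invariance_of_domain[OF cont S inj])
  have deriv_g: "(g has_real_derivative inverse (f' (g y))) (at y)" if y: "y \<in> f ` S" for y
  proof -
    obtain e where e: "e > 0" "ball y e \<subseteq> f ` S"
      using open_image y by (meson open_contains_ball)
    show ?thesis
    proof (rule DERIV_inverse_function[where a = "y - e" and b = "y + e"])
      have "g y \<in> S"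
        using homeomorphism_image2[OF g] y by blast
      then show "(f has_real_derivative f' (g y)) (at (g y))" "f' (g y) \<noteq> 0"
        using deriv nonzero by auto
      show "f (g z) = z" if "y - e < z" "z < y + e" for z
        using that e homeomorphism_apply2[OF g] by (auto simp: dist_real_def subset_iff)
      show "isCont g y"
        using homeomorphism_cont2[OF g] y open_image continuous_on_eq_continuous_at by blast
    qed (use e in auto)
  qed
  show ?thesis
  proof (rule that[OF open_image _ _ _ deriv_g])
    show "g (f x) = x" if "x \<in> S" for x
      using homeomorphism_apply1[OF g that] .
    show "g y \<in> S" if "y \<in> f ` S" for y
      using homeomorphism_image2[OF g] that by blast
    show "f (g y) = y" if "y \<in> f ` S" for y
      using homeomorphism_apply2[OF g that] .
  qed
qed

lemma exists_angle_function:
  fixes g :: "real \<Rightarrow> real"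
  assumes cont: "continuous_on UNIV g"
    and pos: "\<And>\<beta>. 0 < 1 + g \<beta>"
    and periodic: "\<And>\<beta>. g (\<beta> + 2*pi) = g \<beta>"
    and even: "\<And>\<beta>. g (- \<beta>) = g \<beta>"
    and skew: "\<And>\<beta>. g (pi - \<beta>) = - g \<beta>"
  obtains \<alpha> where "\<And>t. (\<alpha> has_real_derivative inverse (1 + g (\<alpha> t))) (at t)" "\<alpha> 0 = \<alpha>0"
    "\<And>t. \<alpha> (t + 2*pi) = \<alpha> t + 2*pi" "strict_mono \<alpha>" "surj \<alpha>"
proof -
  obtain G where "\<forall>x::real. (-\<infinity>::ereal) < x \<longrightarrow> x < \<infinity> \<longrightarrow> (G has_vector_derivative g x) (at x)"
    using einterval_antiderivative[of "-\<infinity>" "\<infinity>" g] cont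
    by (auto simp: continuous_on_eq_continuous_at)
  then have G: "(G has_real_derivative g \<beta>) (at \<beta>)" for \<beta>
    by (simp add: has_real_derivative_iff_has_vector_derivative)
  \<comment> \<open>K is the time needed to reach angle \<beta>; the angle function is its inverse.\<close>
  define K where "K \<beta> = \<beta> + G \<beta>" for \<beta>
  have K: "(K has_real_derivative 1 + g \<beta>) (at \<beta>)" for \<beta>
    unfolding K_def by (auto intro!: derivative_eq_intros G)
  have K_shift: "K (\<beta> + 2*pi) = K \<beta> + 2*pi" for \<beta>
    using antiderivative_shift_2pi[where G = G and g = g, OF G periodic even skew]
    by (simp add: K_def)
  have K_mono: "strict_mono K"
    by (rule strict_monoI, rule DERIV_pos_imp_increasing) (use K pos in blast)+
  have "surj K"
    by (rule surj_if_shift_by_period[where K = K and T = "2*pi", OF _ _ K_shift])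
       (use K in \<open>auto intro: DERIV_continuous continuous_at_imp_continuous_on\<close>)
  then obtain L where LK: "\<And>\<beta>. L (K \<beta>) = \<beta>" and KL: "\<And>t. K (L t) = t"
    and L: "\<And>t. (L has_real_derivative inverse (1 + g (L t))) (at t)"
    using has_real_derivative_inverse_on_open[where f' = "\<lambda>\<beta>. 1 + g \<beta>", OF open_UNIV K]
      strict_mono_imp_inj_on[OF K_mono] pos by (metis UNIV_I less_irrefl)
  define \<alpha> where "\<alpha> t = L (t + K \<alpha>0)" for t
  show ?thesis
  proof (rule that)
    show "(\<alpha> has_real_derivative inverse (1 + g (\<alpha> t))) (at t)" for t
    proof -
      have "((\<lambda>t. L (t + K \<alpha>0)) has_real_derivative inverse (1 + g (L (t + K \<alpha>0))) * 1) (at t)"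
        by (rule DERIV_chain2[OF L]) (auto intro!: derivative_eq_intros)
      then show ?thesis by (simp add: \<alpha>_def[abs_def])
    qed
    show "\<alpha> 0 = \<alpha>0" by (simp add: \<alpha>_def LK)
    show "\<alpha> (t + 2*pi) = \<alpha> t + 2*pi" for t
      by (metis \<alpha>_def KL LK K_shift add.commute add.left_commute)
    show "strict_mono \<alpha>"
      by (rule strict_monoI) (metis \<alpha>_def KL K_mono add_less_cancel_right not_less strict_mono_less_eq)
    show "surj \<alpha>"
      by (rule surjI[of _ "\<lambda>\<beta>. K \<beta> - K \<alpha>0"]) (simp add: \<alpha>_def LK)
  qed
qed

lemma cos_sin_ne_within_period:
  fixes \<alpha> :: "real \<Rightarrow> real"
  assumes "strict_mono \<alpha>" "\<And>t. \<alpha> (t + 2*pi) = \<alpha> t + 2*pi" "0 < s" "s < 2*pi"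
  shows "(cos (\<alpha> s), sin (\<alpha> s)) \<noteq> (cos (\<alpha> 0), sin (\<alpha> 0))"
proof
  assume "(cos (\<alpha> s), sin (\<alpha> s)) = (cos (\<alpha> 0), sin (\<alpha> 0))"
  then obtain n :: int where n: "\<alpha> s = \<alpha> 0 + 2 * pi * n"
    using sin_cos_eq_iff by auto
  have "\<alpha> 0 < \<alpha> s" "\<alpha> s < \<alpha> (0 + 2*pi)"
    using assms by (auto simp: strict_mono_less)
  then have "0 < real_of_int n" "real_of_int n < 1"
    using n assms(2)[of 0] by (simp_all add: zero_less_mult_iff)
  then show False by simp
qed

lemma rotation_curve:
  fixes \<alpha> h :: "real \<Rightarrow> real"
  assumes "(\<alpha> has_real_derivative inverse (1 + h (r * cos (\<alpha> t)))) (at t)"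
  shows "((\<lambda>t. r * cos (\<alpha> t)) has_real_derivative
           (- r * sin (\<alpha> t)) / (1 + h (r * cos (\<alpha> t)))) (at t)"
    and "((\<lambda>t. - r * sin (\<alpha> t)) has_real_derivative
           - (r * cos (\<alpha> t)) / (1 + h (r * cos (\<alpha> t)))) (at t)"
  using assms by (auto intro!: derivative_eq_intros simp: divide_inverse)

lemma inside_image_sphere:
  fixes f :: "'a::euclidean_space \<Rightarrow> 'a"
  assumes r: "0 < r" and cont: "continuous_on (cball c r) f" and inj: "inj_on f (cball c r)"
  shows "f c \<in> inside (f ` sphere c r)"
proof -
  define S where "S = f ` sphere c r"
  define C where "C = connected_component_set (- S) (f c)"
  have "f c \<notin> S"
    using inj r unfolding S_def by (auto simp: inj_on_def dist_commute)
  then have C: "connected C" "C \<subseteq> - S" "f c \<in> C"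
    by (simp_all add: C_def connected_component_subset)
  have "open (f ` ball c r)"
    by (rule invariance_of_domain) (use cont inj in \<open>auto intro: continuous_on_subset inj_on_subset\<close>)
  moreover have compact: "compact (f ` cball c r)"
    by (rule compact_continuous_image[OF cont compact_cball])
  moreover have "C \<subseteq> f ` ball c r \<union> - f ` cball c r"
    using C(2) unfolding S_def by (auto simp: cball_def ball_def sphere_def le_less)
  moreover have "f ` ball c r \<inter> - f ` cball c r \<inter> C = {}"
    using ball_subset_cball by blast
  ultimately have "f ` ball c r \<inter> C = {} \<or> - f ` cball c r \<inter> C = {}"
    using connectedD[OF C(1), of "f ` ball c r" "- f ` cball c r"]
    by (simp add: compact_imp_closed open_Compl)
  moreover have "f c \<in> f ` ball c r"
    using r by simp
  ultimately have "C \<subseteq> f ` cball c r"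
    using C(3) by auto
  then have "bounded C"
    using bounded_subset[OF compact_imp_bounded[OF compact]] by blast
  with \<open>f c \<notin> S\<close> show ?thesis
    by (simp add: inside_def S_def C_def)
qed

lemma sphere_eq_range_circle:
  fixes r :: real
  assumes r: "0 \<le> r"
  shows "sphere (0, 0) r = range (\<lambda>\<beta>. (r * cos \<beta>, - r * sin \<beta>))"
proof (intro equalityI subsetI)
  fix z :: "real \<times> real" assume "z \<in> sphere (0, 0) r"
  then obtain a b where z: "z = (a, b)" and ab: "sqrt (a^2 + b^2) = r"
    by (cases z) (simp add: norm_Pair dist_norm)
  then have r2: "r^2 = a^2 + b^2"
    by (simp flip: ab)
  show "z \<in> range (\<lambda>\<beta>. (r * cos \<beta>, - r * sin \<beta>))"
  proof (cases "r = 0")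
    case True
    then show ?thesis
      using r2 z by (intro range_eqI[of _ _ 0]) (simp add: sum_power2_eq_zero_iff)
  next
    case False
    have "(a / r)^2 + (- b / r)^2 = (a^2 + b^2) / r^2"
      by (simp add: power_divide add_divide_distrib)
    then have "(a / r)^2 + (- b / r)^2 = 1"
      using False by (simp add: r2[symmetric])
    then obtain \<beta> where "a / r = cos \<beta>" "- b / r = sin \<beta>"
      using sincos_total_2pi by metis
    then have "a = r * cos \<beta>" "b = - r * sin \<beta>"
      using False by (auto simp: field_simps)
    then show ?thesis
      using z by (intro range_eqI[of _ _ \<beta>]) simp
  qed
next
  fix z :: "real \<times> real" assume "z \<in> range (\<lambda>\<beta>. (r * cos \<beta>, - r * sin \<beta>))"
  then obtain \<beta> where z: "z = (r * cos \<beta>, - r * sin \<beta>)"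
    by blast
  then show "z \<in> sphere (0, 0) r"
    using r by (simp add: dist_norm norm_Pair power_mult_distrib flip: distrib_left)
qed

locale rotation_conjugacy =
  fixes V :: vfield and \<Psi> :: "real \<times> real \<Rightarrow> real \<times> real" and h :: "real \<Rightarrow> real" and R :: real
  assumes R_pos: "0 < R"
    and \<Psi>_cont: "continuous_on (ball 0 R) \<Psi>"
    and \<Psi>_inj: "inj_on \<Psi> (ball 0 R)"
    and \<Psi>_0: "\<Psi> (0, 0) = (0, 0)"
    and h_cont: "continuous_on {-R<..<R} h"
    and h_pos: "\<And>s. \<bar>s\<bar> < R \<Longrightarrow> 0 < 1 + h s"
    and h_odd: "\<And>s. \<bar>s\<bar> < R \<Longrightarrow> h (- s) = - h s"
    and conjugates: "\<And>a b t. (a has_real_derivative b t / (1 + h (a t))) (at t) \<Longrightarrow>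
        (b has_real_derivative - a t / (1 + h (a t))) (at t) \<Longrightarrow> (a t, b t) \<in> ball 0 R \<Longrightarrow>
        ((\<lambda>t. \<Psi> (a t, b t)) has_vector_derivative V (\<Psi> (a t, b t))) (at t)"
begin

lemma closed_orbit_through_image_circle:
  assumes r: "0 < r" "r < R" and p: "p = \<Psi> (r * cos \<alpha>0, - r * sin \<alpha>0)"
  shows "\<exists>phi. closed_orbit_through V phi p (2*pi)"
proof -
  define g where "g \<beta> = h (r * cos \<beta>)" for \<beta>
  have cos_R: "\<bar>r * cos \<beta>\<bar> < R" for \<beta>
  proof -
    have "r * \<bar>cos \<beta>\<bar> \<le> r * 1"
      using r by (intro mult_left_mono) auto
    moreover have "\<bar>r * cos \<beta>\<bar> = r * \<bar>cos \<beta>\<bar>"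
      using r by (simp add: abs_mult)
    ultimately show ?thesis using r by linarith
  qed
  have "(\<lambda>\<beta>. r * cos \<beta>) ` UNIV \<subseteq> {-R<..<R}"
    using cos_R by (auto simp: abs_less_iff minus_less_iff)
  then have "continuous_on UNIV g"
    unfolding g_def by (intro continuous_on_compose2[OF h_cont] continuous_intros)
  moreover have "0 < 1 + g \<beta>" "g (\<beta> + 2*pi) = g \<beta>" "g (- \<beta>) = g \<beta>" "g (pi - \<beta>) = - g \<beta>" for \<beta>
    using h_pos[OF cos_R] h_odd[OF cos_R] by (simp_all add: g_def)
  ultimately obtain \<alpha> where \<alpha>: "\<And>t. (\<alpha> has_real_derivative inverse (1 + g (\<alpha> t))) (at t)"
    and \<alpha>_0: "\<alpha> 0 = \<alpha>0" and \<alpha>_shift: "\<And>t. \<alpha> (t + 2*pi) = \<alpha> t + 2*pi"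
    and \<alpha>_mono: "strict_mono \<alpha>" and \<alpha>_surj: "surj \<alpha>"
    using exists_angle_function[of g \<alpha>0] by metis
  define \<gamma> where "\<gamma> t = (r * cos (\<alpha> t), - r * sin (\<alpha> t))" for t
  have "range \<gamma> = (\<lambda>\<beta>. (r * cos \<beta>, - r * sin \<beta>)) ` range \<alpha>"
    by (simp add: \<gamma>_def image_image)
  also have "\<dots> = sphere 0 r"
    using sphere_eq_range_circle[of r] r \<alpha>_surj by (simp add: zero_prod_def)
  finally have \<gamma>_range: "range \<gamma> = sphere 0 r" .
  have sphere_ball: "sphere 0 r \<subseteq> ball 0 R" "cball 0 r \<subseteq> ball 0 R"
    using r by auto
  have \<gamma>_ball: "\<gamma> t \<in> ball 0 R" for t
    using \<gamma>_range sphere_ball by blast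
  then have "((\<Psi> \<circ> \<gamma>) has_vector_derivative V ((\<Psi> \<circ> \<gamma>) t)) (at t)" for t
    using conjugates[OF rotation_curve[where h = h, OF \<alpha>[of t, unfolded g_def]]]
    by (simp add: \<gamma>_def o_def)
  moreover have "(\<Psi> \<circ> \<gamma>) s \<noteq> p" if "0 < s" "s < 2*pi" for s
  proof
    assume "(\<Psi> \<circ> \<gamma>) s = p"
    then have "\<Psi> (\<gamma> s) = \<Psi> (\<gamma> 0)"
      by (simp add: p \<gamma>_def \<alpha>_0)
    then have "\<gamma> s = \<gamma> 0"
      by (rule inj_onD[OF \<Psi>_inj _ \<gamma>_ball \<gamma>_ball])
    then show False
      using cos_sin_ne_within_period[OF \<alpha>_mono \<alpha>_shift that] r by (simp add: \<gamma>_def)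
  qed
  moreover have "(0, 0) \<in> inside (range (\<Psi> \<circ> \<gamma>))"
  proof -
    have "\<Psi> 0 \<in> inside (\<Psi> ` sphere 0 r)"
      using inside_image_sphere[OF r(1) continuous_on_subset[OF \<Psi>_cont sphere_ball(2)]
          inj_on_subset[OF \<Psi>_inj sphere_ball(2)]] .
    moreover have "range (\<Psi> \<circ> \<gamma>) = \<Psi> ` sphere 0 r"
      by (simp add: \<gamma>_range[symmetric] image_image)
    ultimately show ?thesis
      using \<Psi>_0 by (simp add: zero_prod_def)
  qed
  moreover have "(\<Psi> \<circ> \<gamma>) 0 = p" "(\<Psi> \<circ> \<gamma>) (t + 2*pi) = (\<Psi> \<circ> \<gamma>) t" for t
    by (simp_all add: p \<gamma>_def \<alpha>_0 \<alpha>_shift)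
  ultimately have "closed_orbit_through V (\<Psi> \<circ> \<gamma>) p (2*pi)"
    unfolding closed_orbit_through_def by simp
  then show ?thesis by blast
qed

theorem isochronous: "is_isochronous_center V"
proof -
  define U where "U = \<Psi> ` ball 0 R"
  have U: "open U" "(0, 0) \<in> U"
    using invariance_of_domain[OF \<Psi>_cont open_ball \<Psi>_inj] R_pos \<Psi>_0
    by (auto simp: U_def zero_prod_def intro!: image_eqI[of _ _ 0])
  have "\<exists>phi. closed_orbit_through V phi p (2*pi)" if p: "p \<in> U - {(0, 0)}" for p
  proof -
    obtain z where z: "z \<in> ball 0 R" "p = \<Psi> z"
      using p by (auto simp: U_def)
    have "z \<noteq> 0"
    proof
      assume "z = 0"
      with z \<Psi>_0 have "p = (0, 0)" by (simp add: zero_prod_def)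
      with p show False by simp
    qed
    have "z \<in> sphere 0 (norm z)"
      by simp
    then obtain \<beta> where "z = (norm z * cos \<beta>, - norm z * sin \<beta>)"
      using sphere_eq_range_circle[of "norm z"] by (auto simp: zero_prod_def)
    moreover have "0 < norm z" "norm z < R"
      using z \<open>z \<noteq> 0\<close> by auto
    ultimately show ?thesis
      using closed_orbit_through_image_circle[of "norm z" p \<beta>] z by simp
  qed
  then have orbits: "\<forall>p \<in> U - {(0, 0)}. \<exists>phi. closed_orbit_through V phi p (2*pi)"
    by blast
  then have "\<forall>p \<in> U - {(0, 0)}. \<exists>phi T. closed_orbit_through V phi p T"
    by blast
  with U orbits show ?thesis
    unfolding is_isochronous_center_def is_center_def
    by (intro conjI exI[of _ U] exI[of _ "2*pi"]) simp_all

qed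

end

\<comment> \<open>Since p0 = q1 = 0, the function g of the Urabe relation is - p1 q0.\<close>
locale urabe_normal_form =
  fixes p1 q0 q2 :: "real poly" and F \<xi> \<xi>' h :: "real \<Rightarrow> real" and \<delta> \<epsilon> :: real
  assumes \<delta>_pos: "0 < \<delta>" and \<epsilon>_pos: "0 < \<epsilon>"
    and p1_nonzero: "\<And>x. \<bar>x\<bar> < \<delta> \<Longrightarrow> poly p1 x \<noteq> 0"
    and F_deriv: "\<And>x. \<bar>x\<bar> < \<delta> \<Longrightarrow>
      (F has_real_derivative - (poly q2 x + poly (pderiv p1) x) / poly p1 x) (at x)"
    and F_0: "F 0 = 0"
    and \<xi>_deriv: "\<And>x. \<bar>x\<bar> < \<delta> \<Longrightarrow> (\<xi> has_real_derivative \<xi>' x) (at x)"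
    and \<xi>'_pos: "\<And>x. \<bar>x\<bar> < \<delta> \<Longrightarrow> 0 < \<xi>' x"
    and \<xi>'_eq: "\<And>x. \<bar>x\<bar> < \<delta> \<Longrightarrow> \<xi>' x * (1 + h (\<xi> x)) = exp (F x)"
    and \<xi>_eq: "\<And>x. \<bar>x\<bar> < \<delta> \<Longrightarrow> \<xi> x = (1 + h (\<xi> x)) * (- poly p1 x * poly q0 x * exp (F x))"
    and \<xi>_0: "\<xi> 0 = 0"
    and h_pos: "\<And>s. \<bar>s\<bar> < \<epsilon> \<Longrightarrow> 0 < 1 + h s"
    and h_odd: "\<And>s. \<bar>s\<bar> < \<epsilon> \<Longrightarrow> h (- s) = - h s"
    and h_cont: "continuous_on {-\<epsilon><..<\<epsilon>} h"
begin

abbreviation field :: vfield where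
  "field \<equiv> \<lambda>(x, y). (poly p1 x * y, poly q0 x + poly q2 x * y^2)"

\<comment> \<open>For a local inverse X of \<xi>, this inverts (x, y) \<mapsto> (\<xi> x, p1(x) y e^F(x)).\<close>
definition chart :: "(real \<Rightarrow> real) \<Rightarrow> real \<times> real \<Rightarrow> real \<times> real" where
  "chart X = (\<lambda>(a, b). (X a, b * exp (- F (X a)) / poly p1 (X a)))"

lemma \<xi>_mono:
  assumes "\<bar>x\<bar> < \<delta>" "\<bar>y\<bar> < \<delta>" "x < y"
  shows "\<xi> x < \<xi> y"
proof (rule DERIV_pos_imp_increasing[where f = \<xi>, OF \<open>x < y\<close>])
  fix z assume "x \<le> z" "z \<le> y"
  then have "\<bar>z\<bar> < \<delta>"
    using assms by linarith
  then show "\<exists>D. DERIV \<xi> z :> D \<and> 0 < D"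
    using \<xi>_deriv \<xi>'_pos by blast
qed

lemma chart_conjugates_rotation:
  fixes X a b :: "real \<Rightarrow> real"
  assumes X: "\<And>s. \<bar>s\<bar> < R \<Longrightarrow>
      \<bar>X s\<bar> < \<delta> \<and> \<xi> (X s) = s \<and> (X has_real_derivative inverse (\<xi>' (X s))) (at s)"
    and R: "R \<le> \<epsilon>"
    and a: "(a has_real_derivative b t / (1 + h (a t))) (at t)"
    and b: "(b has_real_derivative - a t / (1 + h (a t))) (at t)"
    and ab: "(a t, b t) \<in> ball 0 R"
  shows "((\<lambda>t. chart X (a t, b t)) has_vector_derivative field (chart X (a t, b t))) (at t)"
proof -
  define x where "x = X (a t)"
  define H where "H = 1 + h (a t)"
  define E where "E = exp (F x)"
  have "\<bar>a t\<bar> < R"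
    using ab norm_fst_le[of "a t" "b t"] by simp
  with X have x: "\<bar>x\<bar> < \<delta>" "\<xi> x = a t" "(X has_real_derivative inverse (\<xi>' x)) (at (a t))"
    by (simp_all add: x_def)
  have H: "H > 0"
    using h_pos \<open>\<bar>a t\<bar> < R\<close> R by (simp add: H_def)
  have E: "E > 0" by (simp add: E_def)
  have \<xi>': "\<xi>' x * H = E" and \<xi>: "a t = H * (- poly p1 x * poly q0 x * E)"
    using \<xi>'_eq[OF x(1)] \<xi>_eq[OF x(1)] by (simp_all add: x H_def E_def)
  have p1: "poly p1 x \<noteq> 0"
    using p1_nonzero[OF x(1)] .
  have "inverse (\<xi>' x) * (b t / H) = b t / E"
    using \<xi>' H E by (auto simp: field_simps)
  then have Xa: "((\<lambda>t. X (a t)) has_real_derivative b t / E) (at t)"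
    using DERIV_chain2[OF x(3) a] by (simp add: H_def)
  have Fa: "((\<lambda>t. F (X (a t))) has_real_derivative
              - (poly q2 x + poly (pderiv p1) x) / poly p1 x * (b t / E)) (at t)"
    using DERIV_chain2[OF F_deriv[OF x(1), unfolded x_def] Xa] by (simp add: x_def)
  have Pa: "((\<lambda>t. poly p1 (X (a t))) has_real_derivative poly (pderiv p1) x * (b t / E)) (at t)"
    using DERIV_chain2[OF poly_DERIV Xa] by (simp add: x_def)
  have Ea: "((\<lambda>t. exp (- F (X (a t)))) has_real_derivative
              exp (- F x) * - (- (poly q2 x + poly (pderiv p1) x) / poly p1 x * (b t / E))) (at t)"
    using DERIV_chain2[OF DERIV_exp DERIV_minus[OF Fa]] by (simp add: x_def)
  have "((\<lambda>t. b t * exp (- F (X (a t))) / poly p1 (X (a t))) has_real_derivative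
          ((- a t / H * exp (- F x) + exp (- F x) * - (- (poly q2 x + poly (pderiv p1) x) / poly p1 x
             * (b t / E)) * b t) * poly p1 x - b t * exp (- F x) * (poly (pderiv p1) x * (b t / E)))
          / (poly p1 x * poly p1 x)) (at t)"
    using DERIV_divide[OF DERIV_mult[OF b Ea] Pa] p1 by (simp add: x_def H_def)
  moreover have "((- a t / H * exp (- F x) + exp (- F x) * - (- (poly q2 x + poly (pderiv p1) x)
             / poly p1 x * (b t / E)) * b t) * poly p1 x - b t * exp (- F x) * (poly (pderiv p1) x * (b t / E)))
          / (poly p1 x * poly p1 x) = poly q0 x + poly q2 x * (b t * exp (- F x) / poly p1 x)^2"
    unfolding \<xi> using H E p1 by (simp add: E_def exp_minus field_simps power2_eq_square)
  ultimately have ya: "((\<lambda>t. b t * exp (- F (X (a t))) / poly p1 (X (a t))) has_real_derivative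
          poly q0 x + poly q2 x * (b t * exp (- F x) / poly p1 x)^2) (at t)"
    by simp
  with Xa show ?thesis
    using E p1 by (auto simp: chart_def x_def[symmetric] E_def exp_minus field_simps
                        intro!: has_vector_derivative_Pair
                        simp flip: has_real_derivative_iff_has_vector_derivative)
qed

lemma q0_0: "poly q0 0 = 0"
proof -
  have "h 0 = 0"
    using h_odd[of 0] \<epsilon>_pos by simp
  then show ?thesis
    using \<xi>_eq[of 0] \<xi>_0 \<delta>_pos p1_nonzero[of 0] by simp
qed

lemma exists_local_inverse:
  obtains R X where "0 < R" "R \<le> \<epsilon>" "X 0 = 0"
    "\<And>s. \<bar>s\<bar> < R \<Longrightarrow>
       \<bar>X s\<bar> < \<delta> \<and> \<xi> (X s) = s \<and> (X has_real_derivative inverse (\<xi>' (X s))) (at s)"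
proof -
  have inj: "inj_on \<xi> (ball 0 \<delta>)"
  proof (rule inj_onI)
    fix x y assume "x \<in> ball 0 \<delta>" "y \<in> ball 0 \<delta>" "\<xi> x = \<xi> y"
    then show "x = y"
      using \<xi>_mono[of x y] \<xi>_mono[of y x] by (cases x y rule: linorder_cases) auto
  qed
  have "(\<xi> has_real_derivative \<xi>' x) (at x)" "\<xi>' x \<noteq> 0" if "x \<in> ball 0 \<delta>" for x
    using \<xi>_deriv[of x] \<xi>'_pos[of x] that by auto
  then obtain X where open_image: "open (\<xi> ` ball 0 \<delta>)"
    and X_\<xi>: "\<And>x. x \<in> ball 0 \<delta> \<Longrightarrow> X (\<xi> x) = x"
    and X_in: "\<And>s. s \<in> \<xi> ` ball 0 \<delta> \<Longrightarrow> X s \<in> ball 0 \<delta>"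
    and \<xi>_X: "\<And>s. s \<in> \<xi> ` ball 0 \<delta> \<Longrightarrow> \<xi> (X s) = s"
    and X_deriv: "\<And>s. s \<in> \<xi> ` ball 0 \<delta> \<Longrightarrow> (X has_real_derivative inverse (\<xi>' (X s))) (at s)"
    using has_real_derivative_inverse_on_open[OF open_ball _ _ inj] by blast
  have "0 \<in> \<xi> ` ball 0 \<delta>"
    by (rule image_eqI[of _ _ 0]) (use \<xi>_0 \<delta>_pos in auto)
  then obtain R0 where R0: "0 < R0" "ball 0 R0 \<subseteq> \<xi> ` ball 0 \<delta>"
    using open_contains_ball open_image by blast
  show ?thesis
  proof (rule that[of "min R0 \<epsilon>" X])
    show "0 < min R0 \<epsilon>" "min R0 \<epsilon> \<le> \<epsilon>"
      using R0 \<epsilon>_pos by auto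
    show "X 0 = 0"
      using X_\<xi>[of 0] \<xi>_0 \<delta>_pos by simp
    fix s :: real assume "\<bar>s\<bar> < min R0 \<epsilon>"
    then have "s \<in> \<xi> ` ball 0 \<delta>"
      using R0(2) by auto
    then show "\<bar>X s\<bar> < \<delta> \<and> \<xi> (X s) = s \<and> (X has_real_derivative inverse (\<xi>' (X s))) (at s)"
      using X_in \<xi>_X X_deriv by auto
  qed
qed

lemma continuous_on_chart:
  assumes X: "\<And>s. \<bar>s\<bar> < R \<Longrightarrow>
      \<bar>X s\<bar> < \<delta> \<and> \<xi> (X s) = s \<and> (X has_real_derivative inverse (\<xi>' (X s))) (at s)"
  shows "continuous_on (ball 0 R) (chart X)"
proof -
  have X_cont: "continuous_on {-R<..<R} X"
  proof (intro continuous_at_imp_continuous_on ballI)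
    fix s :: real assume "s \<in> {-R<..<R}"
    then show "isCont X s"
      using X[of s] DERIV_isCont by (auto simp: abs_less_iff)
  qed
  have F_cont: "continuous_on {-\<delta><..<\<delta>} F"
  proof (intro continuous_at_imp_continuous_on ballI)
    fix x :: real assume "x \<in> {-\<delta><..<\<delta>}"
    then show "isCont F x"
      using F_deriv[of x] DERIV_isCont by (auto simp: abs_less_iff)
  qed
  have fst_ball: "\<bar>fst z\<bar> < R" if "z \<in> ball 0 R" for z :: "real \<times> real"
    using that norm_fst_le[of "fst z" "snd z"] by simp
  have "fst ` ball (0 :: real \<times> real) R \<subseteq> {-R<..<R}"
  proof (rule image_subsetI)
    fix z :: "real \<times> real" assume "z \<in> ball 0 R"
    then have "\<bar>fst z\<bar> < R" by (rule fst_ball)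
    then show "fst z \<in> {-R<..<R}"
      by (simp add: abs_less_iff)
  qed
  then have X_fst: "continuous_on (ball (0 :: real \<times> real) R) (\<lambda>z. X (fst z))"
    by (rule continuous_on_compose2[OF X_cont continuous_on_fst[OF continuous_on_id]])
  have X_ball: "\<bar>X (fst z)\<bar> < \<delta>" if "z \<in> ball 0 R" for z :: "real \<times> real"
    using X fst_ball[OF that] by simp
  have "(\<lambda>z. X (fst z)) ` ball (0 :: real \<times> real) R \<subseteq> {-\<delta><..<\<delta>}"
  proof (rule image_subsetI)
    fix z :: "real \<times> real" assume "z \<in> ball 0 R"
    then have "\<bar>X (fst z)\<bar> < \<delta>" by (rule X_ball)
    then show "X (fst z) \<in> {-\<delta><..<\<delta>}"
      by (simp add: abs_less_iff)
  qed
  then have F_X_fst: "continuous_on (ball (0 :: real \<times> real) R) (\<lambda>z. F (X (fst z)))"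
    by (rule continuous_on_compose2[OF F_cont X_fst])
  show ?thesis
    unfolding chart_def split_def
    by (intro continuous_on_Pair continuous_on_divide continuous_on_mult continuous_on_snd
        continuous_on_id continuous_on_exp continuous_on_minus continuous_on_poly ballI
        p1_nonzero X_ball X_fst F_X_fst)
qed

lemma inj_on_chart:
  assumes X: "\<And>s. \<bar>s\<bar> < R \<Longrightarrow> \<bar>X s\<bar> < \<delta> \<and> \<xi> (X s) = s"
  shows "inj_on (chart X) (ball 0 R)"
proof (rule inj_onI, clarify)
  fix a b a' b' assume ab: "(a, b) \<in> ball 0 R" "(a', b') \<in> ball 0 R"
    and eq: "chart X (a, b) = chart X (a', b')"
  have a: "\<bar>a\<bar> < R" "\<bar>a'\<bar> < R"
    using ab(1) norm_fst_le[of a b] ab(2) norm_fst_le[of a' b'] by simp_all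
  from eq have "\<xi> (X a) = \<xi> (X a')"
    by (simp add: chart_def)
  then have "a = a'"
    using X a by simp
  with eq show "a = a' \<and> b = b'"
    using p1_nonzero X[OF a(1)] by (auto simp: chart_def)
qed

theorem isochronous: "is_isochronous_center field"
proof -
  obtain R X where R: "0 < R" "R \<le> \<epsilon>" and X_0: "X 0 = 0"
    and X: "\<And>s. \<bar>s\<bar> < R \<Longrightarrow>
      \<bar>X s\<bar> < \<delta> \<and> \<xi> (X s) = s \<and> (X has_real_derivative inverse (\<xi>' (X s))) (at s)"
    using exists_local_inverse by blast
  interpret rot: rotation_conjugacy field "chart X" h R
  proof
    show "continuous_on (ball 0 R) (chart X)"
      using X by (rule continuous_on_chart)
    show "inj_on (chart X) (ball 0 R)"
      using X by (intro inj_on_chart) blast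
    show "chart X (0, 0) = (0, 0)"
      using X_0 by (simp add: chart_def)
    show "continuous_on {-R<..<R} h"
      by (rule continuous_on_subset[OF h_cont]) (use R in auto)
    show "0 < 1 + h s" "h (- s) = - h s" if "\<bar>s\<bar> < R" for s
      using h_pos h_odd that R(2) by simp_all
    show "((\<lambda>t. chart X (a t, b t)) has_vector_derivative field (chart X (a t, b t))) (at t)"
      if "(a has_real_derivative b t / (1 + h (a t))) (at t)"
        "(b has_real_derivative - a t / (1 + h (a t))) (at t)" "(a t, b t) \<in> ball 0 R"
      for a b :: "real \<Rightarrow> real" and t
      by (rule chart_conjugates_rotation[OF X R(2) that])
  qed (rule R(1))
  show ?thesis
    by (rule rot.isochronous)
qed

theorem urabe:
  assumes "odd_analytic_near_0 h"
  shows "urabe_function field h"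
proof -
  define f where "f x = - (poly q2 x + poly (pderiv p1) x) / poly p1 x" for x
  have F_eq: "oint 0 x f = F x" if "\<bar>x\<bar> < \<delta>" for x
    using oint_eq_diff_antiderivative[of \<delta> F f x] F_deriv that F_0 by (simp add: f_def)
  have urabe_eq: "\<xi> x / (1 + h (\<xi> x)) = - poly p1 x * poly q0 x * exp (oint 0 x f)"
    if "\<bar>x\<bar> < \<delta>" for x
  proof -
    have "1 + h (\<xi> x) \<noteq> 0"
      using \<xi>'_eq[OF that] by (metis exp_not_eq_zero mult_zero_right)
    then show ?thesis
      using \<xi>_eq[OF that] F_eq[OF that] by (simp add: field_simps)
  qed
  have energy: "(\<xi> x)^2 / 2 = oint 0 x (\<lambda>s. - poly p1 s * poly q0 s * exp (2 * oint 0 s f))"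
    if "\<bar>x\<bar> < \<delta>" for x
  proof -
    have "((\<lambda>x. (\<xi> x)^2 / 2) has_real_derivative
            - poly p1 s * poly q0 s * exp (2 * oint 0 s f)) (at s)" if s: "\<bar>s\<bar> < \<delta>" for s
    proof -
      have "\<xi> s * \<xi>' s = - poly p1 s * poly q0 s * (exp (F s) * (\<xi>' s * (1 + h (\<xi> s))))"
        by (subst \<xi>_eq[OF s]) (simp add: algebra_simps)
      then have "\<xi> s * \<xi>' s = - poly p1 s * poly q0 s * exp (2 * oint 0 s f)"
        using \<xi>'_eq[OF s] F_eq[OF s] by (simp add: mult_exp_exp)
      then show ?thesis
        using \<xi>_deriv[OF s] by (auto intro!: derivative_eq_intros simp: mult.commute)
    qed
    then have "oint 0 x (\<lambda>s. - poly p1 s * poly q0 s * exp (2 * oint 0 s f)) = (\<xi> x)^2 / 2 - (\<xi> 0)^2 / 2"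
      by (rule oint_eq_diff_antiderivative[OF _ that])
    then show ?thesis
      using \<xi>_0 by simp
  qed
  have sign: "0 < x * \<xi> x" if "\<bar>x\<bar> < \<delta>" "x \<noteq> 0" for x
    using \<xi>_mono[of 0 x] \<xi>_mono[of x 0] \<xi>_0 that \<delta>_pos
    by (cases x "0::real" rule: linorder_cases) (auto simp: zero_less_mult_iff)
  show ?thesis
    unfolding urabe_function_def
  proof (intro conjI isochronous assms, rule exI[of _ 0], rule exI[of _ p1], rule exI[of _ q0],
         rule exI[of _ 0], rule exI[of _ q2], intro conjI allI impI)
    show "poly p1 0 \<noteq> 0"
      using p1_nonzero \<delta>_pos by simp
    show "poly q0 0 = 0"
      by (rule q0_0)
    show "let f = \<lambda>x. - (poly q2 x + poly (pderiv p1) x) / poly p1 x;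
              g = \<lambda>x. - poly q2 x * (poly 0 x)\<^sup>2 / poly p1 x + poly 0 x * poly 0 x - poly p1 x * poly q0 x;
              F = \<lambda>x. oint 0 x f
          in \<exists>\<delta>>0. \<exists>\<xi>. \<forall>x. \<bar>x\<bar> < \<delta> \<longrightarrow>
               (\<xi> x)\<^sup>2 / 2 = oint 0 x (\<lambda>s. g s * exp (2 * F s)) \<and>
               (x \<noteq> 0 \<longrightarrow> x * \<xi> x > 0) \<and> \<xi> x / (1 + h (\<xi> x)) = g x * exp (F x)"
      unfolding Let_def f_def[symmetric]
      using \<delta>_pos energy sign urabe_eq by (intro exI[of _ \<delta>] conjI exI[of _ \<xi>] allI impI) auto
  qed simp_all
qed

end

lemma urabe_function_cong:
  assumes "urabe_function W h" and "\<And>x y. V (x, y) = W (x, y)"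
  shows "urabe_function V h"
proof -
  have "V = W"
    using assms(2) by (auto simp: fun_eq_iff)
  with assms(1) show ?thesis by simp
qed

lemma exp_of_nat_mult_ln: "u > 0 \<Longrightarrow> exp (real n * ln u) = u ^ n"
  by (metis exp_ln exp_of_nat_mult)

lemma exp_minus_of_nat_mult_ln: "u > 0 \<Longrightarrow> exp (- (real n * ln u)) = 1 / u ^ n"
  by (simp add: exp_minus exp_of_nat_mult_ln inverse_eq_divide)

lemma linear_over_sqrt_near_0:
  fixes m c k \<epsilon> :: real
  assumes k: "k > 0" and c: "\<bar>c\<bar> * \<epsilon>^2 \<le> k / 2" and m: "m^2 * \<epsilon>^2 < k / 2"
  shows "\<And>s. \<bar>s\<bar> < \<epsilon> \<Longrightarrow> 0 < 1 + m * s / sqrt (c * s^2 + k)"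
    and "continuous_on {-\<epsilon><..<\<epsilon>} (\<lambda>s. m * s / sqrt (c * s^2 + k))"
proof -
  have s2: "s^2 \<le> \<epsilon>^2" if "\<bar>s\<bar> < \<epsilon>" for s
    using that by (metis abs_ge_zero less_imp_le power2_abs power_mono)
  have den: "k / 2 \<le> c * s^2 + k" if "\<bar>s\<bar> < \<epsilon>" for s
  proof -
    have "- c \<le> \<bar>c\<bar>" by simp
    then have "- c * s^2 \<le> \<bar>c\<bar> * s^2" by (rule mult_right_mono) simp
    then have "- (c * s^2) \<le> \<bar>c\<bar> * s^2" by simp
    also have "\<dots> \<le> \<bar>c\<bar> * \<epsilon>^2" using s2[OF that] by (simp add: mult_left_mono)
    finally show ?thesis using c by linarith
  qed
  have pos: "0 < sqrt (c * s^2 + k)" if "\<bar>s\<bar> < \<epsilon>" for s using den[OF that] k by simp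
  show "0 < 1 + m * s / sqrt (c * s^2 + k)" if s: "\<bar>s\<bar> < \<epsilon>" for s
  proof -
    have "(m * s)^2 = m^2 * s^2" by (simp add: power_mult_distrib)
    also have "\<dots> \<le> m^2 * \<epsilon>^2" using s2[OF s] by (simp add: mult_left_mono)
    also have "\<dots> < c * s^2 + k" using m den[OF s] by linarith
    finally have "\<bar>m * s\<bar> < sqrt (c * s^2 + k)" by (simp add: real_less_rsqrt)
    then have "- (m * s) < sqrt (c * s^2 + k)" by linarith
    then show ?thesis using pos[OF s] by (simp add: field_simps)
  qed
  show "continuous_on {-\<epsilon><..<\<epsilon>} (\<lambda>s. m * s / sqrt (c * s^2 + k))"
  proof -
    have "c * s^2 + k \<noteq> 0" if "s \<in> {-\<epsilon><..<\<epsilon>}" for s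
      using den[of s] that k by (auto simp: abs_less_iff)
    then show ?thesis by (auto intro!: continuous_intros)
  qed
qed

lemma has_real_derivative_div_sqrt:
  fixes Q :: "real \<Rightarrow> real"
  assumes "(Q has_real_derivative D) (at x)" "Q x > 0"
  shows "((\<lambda>x. x / sqrt (Q x)) has_real_derivative (2 * Q x - x * D) / (2 * Q x * sqrt (Q x))) (at x)"
  using assms by (auto intro!: derivative_eq_intros simp: field_simps)

lemma has_real_derivative_ln_sqrt:
  fixes Q :: "real \<Rightarrow> real"
  assumes "(Q has_real_derivative D) (at x)" "Q x > 0"
  shows "((\<lambda>x. ln (sqrt (Q x))) has_real_derivative D / (2 * Q x)) (at x)"
  using assms by (auto intro!: derivative_eq_intros simp: field_simps)

lemma has_real_derivative_inverse_cube_minus_cube_sqrt: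
  fixes Q :: "real \<Rightarrow> real"
  assumes Qd: "(Q has_real_derivative D) (at x)" and Qx: "Q x > 0"
  shows "((\<lambda>x. 2/3 * (1 / (sqrt (Q x))^3 - (sqrt (Q x))^3)) has_real_derivative
           - D * (1 / (sqrt (Q x))^5 + sqrt (Q x))) (at x)"
proof -
  define S where "S = sqrt (Q x)"
  have S: "S > 0" "S^2 = Q x" using Qx by (simp_all add: S_def)
  have M: "((\<lambda>x. sqrt (Q x)) has_real_derivative D / (2 * S)) (at x)"
    using Qd Qx by (auto intro!: derivative_eq_intros simp: S_def field_simps)
  have p3: "((\<lambda>x. (sqrt (Q x))^3) has_real_derivative real 3 * S^(3 - Suc 0) * (D / (2 * S))) (at x)"
    using DERIV_chain2[OF DERIV_pow[of 3] M] by (simp only: S_def)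
  have i3: "((\<lambda>x. 1 / (sqrt (Q x))^3) has_real_derivative
      (0 * (sqrt (Q x))^3 - 1 * (real 3 * S^(3 - Suc 0) * (D / (2 * S)))) / ((sqrt (Q x))^3 * (sqrt (Q x))^3)) (at x)"
    by (rule DERIV_divide[OF DERIV_const p3]) (use Qx in simp)
  show ?thesis
    apply (rule DERIV_cong[OF DERIV_cmult[OF DERIV_diff[OF i3 p3]]])
    using S(1) unfolding S_def[symmetric]
    by (simp add: field_simps power2_eq_square power3_eq_cube eval_nat_numeral)
qed

lemma has_real_derivative_quot_sqrt:
  fixes N U Q :: "real \<Rightarrow> real"
  assumes Nd: "(N has_real_derivative N') (at x)" and Ud: "(U has_real_derivative U') (at x)"
    and Qd: "(Q has_real_derivative Q') (at x)" and Qx: "Q x > 0" and Ux: "U x \<noteq> 0"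
  shows "((\<lambda>x. N x / (U x * sqrt (Q x))) has_real_derivative
           (N' * U x * Q x - N x * U' * Q x - N x * U x * Q' / 2) / ((U x)^2 * Q x * sqrt (Q x))) (at x)"
proof -
  define S where "S = sqrt (Q x)"
  have S: "S > 0" "S^2 = Q x" using Qx by (simp_all add: S_def)
  have M: "((\<lambda>x. sqrt (Q x)) has_real_derivative Q' / (2 * S)) (at x)"
    using Qd Qx by (auto intro!: derivative_eq_intros simp: S_def field_simps)
  have D: "((\<lambda>x. U x * sqrt (Q x)) has_real_derivative U' * sqrt (Q x) + Q' / (2 * S) * U x) (at x)"
    by (rule DERIV_mult[OF Ud M])
  show ?thesis
    apply (rule DERIV_cong[OF DERIV_divide[OF Nd D]])
    using S Ux unfolding S_def[symmetric] unfolding S(2)[symmetric]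
    by (simp_all add: field_simps power2_eq_square)
qed

lemma urabe_case_i_identities:
  fixes M :: real assumes M: "M > 0"
  shows "sqrt (16 + 9 * (2/3 * (1 / M^3 - M^3))^2) = 2 * (1 / M^3 + M^3)"
    and "1 + 3 * (2/3 * (1 / M^3 - M^3)) / (2 * (1 / M^3 + M^3)) = 2 / (1 + M^6)"
    and "- (- 1/2) * (1 / M^5 + M) * (2 / (1 + M^6)) = 1 / M^5"
    and "2/3 * (1 / M^3 - M^3) = 2 / (1 + M^6) *
           (- (- (M^2 * (1 - M^2 + (M^2)^2))) * ((1 - (M^2)^3) * (1 + M^2) / 3) * (1 / M^5))"
proof -
  have p6: "1 + M^6 > 0" by (simp add: add_pos_nonneg)
  have A: "1 / M^3 + M^3 = (1 + M^6) / M^3" "1 / M^3 - M^3 = (1 - M^6) / M^3"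
    using M by (simp_all add: field_simps eval_nat_numeral)
  show "sqrt (16 + 9 * (2/3 * (1 / M^3 - M^3))^2) = 2 * (1 / M^3 + M^3)"
  proof (rule real_sqrt_unique)
    show "(2 * (1 / M^3 + M^3))^2 = 16 + 9 * (2/3 * (1 / M^3 - M^3))^2"
      using M by (simp add: field_simps power2_eq_square eval_nat_numeral)
    show "0 \<le> 2 * (1 / M^3 + M^3)" using M by simp
  qed
  have g: "(3 * (2/3 * (a / M^3))) / (2 * (b / M^3)) = a / b" for a b using M
    by (cases "b = 0") (simp_all add: field_simps)
  show "1 + 3 * (2/3 * (1 / M^3 - M^3)) / (2 * (1 / M^3 + M^3)) = 2 / (1 + M^6)"
    unfolding A g using p6 by (simp add: field_simps)
  define P where "P = 1 + M^6"
  have P: "P > 0" using p6 by (simp add: P_def)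
  have f5: "1 / M^5 + M = P / M^5" using M by (simp add: P_def field_simps eval_nat_numeral)
  show "- (- 1/2) * (1 / M^5 + M) * (2 / (1 + M^6)) = 1 / M^5"
    unfolding f5 P_def[symmetric] using M P by (simp add: field_simps)
  have p2: "1 + M^2 > 0" by (simp add: add_pos_nonneg)
  have C: "1 - (M^2)^3 = 2 - P" by (simp add: P_def eval_nat_numeral)
  have C': "1 - M^6 = 2 - P" by (simp add: P_def)
  have R: "- (- (M^2 * Bq)) * ((2 - P) * (1 + M^2) / 3) * (1 / M^5) = 2 * (2 - P) / (3 * M^3) * (P / 2)"
    if "Bq * (1 + M^2) = P" for Bq
  proof -
    have "- (- (M^2 * Bq)) * ((2 - P) * (1 + M^2) / 3) * (1 / M^5) = M^2 * (Bq * (1 + M^2)) * (2 - P) / (3 * M^5)"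
      using M by (simp add: field_simps)
    also have "\<dots> = 2 * (2 - P) / (3 * M^3) * (P / 2)" unfolding that using M by (simp add: field_simps eval_nat_numeral)
    finally show ?thesis .
  qed
  have BB: "(1 - M^2 + (M^2)^2) * (1 + M^2) = P" by (simp add: P_def algebra_simps eval_nat_numeral)
  show "2/3 * (1 / M^3 - M^3) = 2 / (1 + M^6) *
           (- (- (M^2 * (1 - M^2 + (M^2)^2))) * ((1 - (M^2)^3) * (1 + M^2) / 3) * (1 / M^5))"
    unfolding C unfolding R[OF BB] P_def[symmetric] A(2) unfolding C[symmetric]
    using P M by (simp add: field_simps)
qed

lemma urabe_case_i:
  "urabe_function
     (\<lambda>(x, y). (- y + x * y - 1/2 * x^2 * y + 1/8 * x^3 * y,
                 x - 3/4 * x^2 + 1/4 * y^2 + 5/24 * x^3 + 3/8 * x * y^2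
                   - 1/16 * x^2 * y^2 - 1/48 * x^4))
     (\<lambda>s. 3 * s / sqrt (16 + 9 * s^2))"
proof -
  have hh: "(\<lambda>s::real. 3 * s / sqrt (16 + 9 * s^2)) = (\<lambda>s. 3 * s / sqrt (9 * s^2 + 16))"
    by (simp add: add.commute)
  note hp = linear_over_sqrt_near_0[where k = 16 and \<epsilon> = "1/2" and c = 9 and m = 3, simplified]
  have han: "odd_analytic_near_0 (\<lambda>s::real. 3 * s / sqrt (16 + 9 * s^2))"
    unfolding hh by (rule odd_analytic_near_0_linear_over_sqrt) simp
  define Q where "Q = (\<lambda>x::real. 1 - x / 2)"
  have Qd: "(Q has_real_derivative (- 1/2)) (at x)" for x
    unfolding Q_def by (auto intro!: derivative_eq_intros)
  define p1 :: "real poly" where "p1 = [:-1, 1, -1/2, 1/8:]"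
  define q0 :: "real poly" where "q0 = [:0, 1, -3/4, 5/24, -1/48:]"
  define q2 :: "real poly" where "q2 = [:1/4, 3/8, -1/16:]"
  have P1: "poly p1 x = - (Q x * (1 - Q x + (Q x)^2))" for x
    by (simp add: p1_def Q_def field_simps power2_eq_square power3_eq_cube)
  have P1': "poly q2 x + poly (pderiv p1) x = 5/4 * (1 - Q x + (Q x)^2)" for x
    by (simp add: p1_def q2_def Q_def pderiv_pCons field_simps power2_eq_square)
  have Q0: "poly q0 x = (1 - (Q x)^3) * (1 + Q x) / 3" for x
    by (simp add: q0_def Q_def field_simps power2_eq_square power3_eq_cube power4_eq_xxxx)
  have V: "\<And>x y. (case (x, y) of (x, y) \<Rightarrow> (- y + x * y - 1/2 * x^2 * y + 1/8 * x^3 * y,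
                 x - 3/4 * x^2 + 1/4 * y^2 + 5/24 * x^3 + 3/8 * x * y^2
                   - 1/16 * x^2 * y^2 - 1/48 * x^4)) =
        (poly p1 x * y, poly q0 x + poly q2 x * y^2)"
    by (simp add: p1_def q0_def q2_def field_simps power2_eq_square power3_eq_cube power4_eq_xxxx)
  interpret urabe_normal_form p1 q0 q2 "\<lambda>x. - (real 5 * ln (sqrt (Q x)))" "\<lambda>x. 2/3 * (1 / (sqrt (Q x))^3 - (sqrt (Q x))^3)"
      "\<lambda>x. - (- 1/2) * (1 / (sqrt (Q x))^5 + sqrt (Q x))"
      "\<lambda>s. 3 * s / sqrt (16 + 9 * s^2)" "1/2" "1/2"
  proof
    show "(0::real) < 1/2" by simp
    fix x :: real assume x: "\<bar>x\<bar> < 1/2"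
    have Qx: "Q x > 0" using x by (simp add: Q_def)
    define M where "M = sqrt (Q x)"
    have M: "M > 0" "M^2 = Q x" using Qx by (simp_all add: M_def)
    have A: "1 - Q x + (Q x)^2 > 0"
    proof -
      have "1 - Q x + (Q x)^2 = (Q x - 1/2)^2 + 3/4" by (simp add: power2_eq_square algebra_simps)
      then show ?thesis by (metis add_nonneg_pos zero_le_power2 zero_less_divide_iff zero_less_numeral)
    qed
    show "poly p1 x \<noteq> 0" using Qx A by (simp add: P1)
    show "((\<lambda>x. - (real 5 * ln (sqrt (Q x)))) has_real_derivative
            - (poly q2 x + poly (pderiv p1) x) / poly p1 x) (at x)"
    proof (rule DERIV_cong[OF DERIV_minus[OF DERIV_cmult[OF has_real_derivative_ln_sqrt[OF Qd Qx]]]])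
      show "- (real 5 * (- 1/2 / (2 * Q x))) = - (poly q2 x + poly (pderiv p1) x) / poly p1 x"
      proof -
        define B where "B = 1 - Q x + (Q x)^2"
        have B: "B > 0" using A by (simp add: B_def)
        show ?thesis unfolding P1 P1' B_def[symmetric] using Qx B by (simp add: field_simps)
      qed
    qed
    show "((\<lambda>x. 2/3 * (1 / (sqrt (Q x))^3 - (sqrt (Q x))^3)) has_real_derivative
            - (- 1/2) * (1 / (sqrt (Q x))^5 + sqrt (Q x))) (at x)"
      by (rule has_real_derivative_inverse_cube_minus_cube_sqrt[OF Qd Qx])
    have e: "exp (- (real 5 * ln (sqrt (Q x)))) = 1 / M^5"
      unfolding M_def by (rule exp_minus_of_nat_mult_ln) (use Qx in simp)
    note al = urabe_case_i_identities[OF M(1)]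
    show "0 < - (- 1/2) * (1 / (sqrt (Q x))^5 + sqrt (Q x))"
      unfolding M_def[symmetric] using M by (intro mult_pos_pos add_pos_pos) simp_all
    show "- (- 1/2) * (1 / (sqrt (Q x))^5 + sqrt (Q x)) *
          (1 + 3 * (2/3 * (1 / (sqrt (Q x))^3 - (sqrt (Q x))^3)) /
           sqrt (16 + 9 * (2/3 * (1 / (sqrt (Q x))^3 - (sqrt (Q x))^3))^2)) =
          exp (- (real 5 * ln (sqrt (Q x))))"
      unfolding e unfolding M_def[symmetric] al(1) al(2) by (rule al(3))
    show "2/3 * (1 / (sqrt (Q x))^3 - (sqrt (Q x))^3) =
          (1 + 3 * (2/3 * (1 / (sqrt (Q x))^3 - (sqrt (Q x))^3)) /
           sqrt (16 + 9 * (2/3 * (1 / (sqrt (Q x))^3 - (sqrt (Q x))^3))^2)) *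
          (- poly p1 x * poly q0 x * exp (- (real 5 * ln (sqrt (Q x)))))"
      unfolding e P1 Q0 unfolding M_def[symmetric] al(1) al(2) unfolding M(2)[symmetric] by (rule al(4))
  next
    show "(\<lambda>x. 2/3 * (1 / (sqrt (Q x))^3 - (sqrt (Q x))^3)) 0 = 0" by (simp add: Q_def)
  next
    show "(\<lambda>x. - (real 5 * ln (sqrt (Q x)))) 0 = 0" by (simp add: Q_def)
  qed (use hp in \<open>auto simp: add.commute power2_eq_square\<close>)
  show ?thesis
    by (rule urabe_function_cong[OF urabe[OF han]]) (use V in simp)
qed

lemma urabe_case_ii_identity_1: "(T::real) \<noteq> 0 \<Longrightarrow> a \<noteq> 0 \<Longrightarrow> b \<noteq> 0 \<Longrightarrow> T / (2 * a * b) * (2 / T) = 1 / (a * b)"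
  by (simp add: field_simps)

lemma urabe_case_ii_identity_2: "(T::real) \<noteq> 0 \<Longrightarrow> U \<noteq> 0 \<Longrightarrow> S \<noteq> 0 \<Longrightarrow>
   k / (U * S) = 2 / T * (- (- (U * S^2)) * (k * T / 2) * (1 / (U^2 * S^3)))"
  by (simp add: field_simps power2_eq_square power3_eq_cube)

lemma urabe_case_ii:
  "urabe_function
     (\<lambda>(x, y). (- y + x * y + 9 * x^2 * y + 6 * x^3 * y,
                 x + 3/2 * x^2 - 1/2 * y^2 + x^3 + 12 * x * y^2
                   + 12 * x^2 * y^2 + 1/2 * x^4))
     (\<lambda>s. - s / sqrt (4 + 49 * s^2))"
proof -
  have hh: "(\<lambda>s::real. - s / sqrt (4 + 49 * s^2)) = (\<lambda>s. (-1) * s / sqrt (49 * s^2 + 4))"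
    by (simp add: add.commute)
  note hp = linear_over_sqrt_near_0[where k = 4 and \<epsilon> = "1/5" and c = 49 and m = "-1", simplified]
  have han: "odd_analytic_near_0 (\<lambda>s::real. - s / sqrt (4 + 49 * s^2))"
    unfolding hh by (rule odd_analytic_near_0_linear_over_sqrt) simp
  define Q where "Q = (\<lambda>x::real. 1 - 3 * x - 3 * x^2)"
  define U where "U = (\<lambda>x::real. 1 + 2 * x)"
  define K where "K = (\<lambda>x::real. x + x^2)"
  have Qd: "(Q has_real_derivative (- 3 - 6 * x)) (at x)" for x
    unfolding Q_def by (auto intro!: derivative_eq_intros)
  have Ud: "(U has_real_derivative 2) (at x)" for x
    unfolding U_def by (auto intro!: derivative_eq_intros)
  have Kd: "(K has_real_derivative 1 + 2 * x) (at x)" for x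
    unfolding K_def by (auto intro!: derivative_eq_intros)
  define p1 :: "real poly" where "p1 = [:-1, 1, 9, 6:]"
  define q0 :: "real poly" where "q0 = [:0, 1, 3/2, 1, 1/2:]"
  define q2 :: "real poly" where "q2 = [:-1/2, 12, 12:]"
  have P1: "poly p1 x = - (U x * Q x)" for x
    by (simp add: p1_def Q_def U_def field_simps power2_eq_square power3_eq_cube)
  have P1': "poly q2 x + poly (pderiv p1) x = 1/2 + 30 * x + 30 * x^2" for x
    by (simp add: p1_def q2_def pderiv_pCons field_simps power2_eq_square)
  have Q0: "poly q0 x = K x * (2 + K x) / 2" for x
    by (simp add: q0_def K_def field_simps power2_eq_square power3_eq_cube power4_eq_xxxx)
  have V: "\<And>x y. (case (x, y) of (x, y) \<Rightarrow> (- y + x * y + 9 * x^2 * y + 6 * x^3 * y,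
                 x + 3/2 * x^2 - 1/2 * y^2 + x^3 + 12 * x * y^2
                   + 12 * x^2 * y^2 + 1/2 * x^4)) =
        (poly p1 x * y, poly q0 x + poly q2 x * y^2)"
    by (simp add: p1_def q0_def q2_def field_simps power2_eq_square power3_eq_cube power4_eq_xxxx)
  interpret urabe_normal_form p1 q0 q2 "\<lambda>x. - (real 2 * ln (U x) + real 3 * ln (sqrt (Q x)))" "\<lambda>x. K x / (U x * sqrt (Q x))"
      "\<lambda>x. (2 + K x) / (2 * (U x)^2 * (sqrt (Q x))^3)"
      "\<lambda>s. - s / sqrt (4 + 49 * s^2)" "1/4" "1/5"
  proof
    show "(0::real) < 1/4" by simp
    show "(0::real) < 1/5" by simp
    fix x :: real assume x: "\<bar>x\<bar> < 1/4"
    have Qx: "Q x > 0"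
    proof -
      have "3 * x + 3 * x^2 \<le> 3 * \<bar>x\<bar> + 3 * \<bar>x\<bar>^2" by (simp add: abs_le_iff)
      also have "\<dots> \<le> 3 * (1/4) + 3 * (1/4)^2" using x
        by (intro add_mono mult_left_mono power_mono) auto
      also have "\<dots> = 15/16" by (simp add: power2_eq_square)
      finally show ?thesis unfolding Q_def by linarith
    qed
    have Ux: "U x > 0" using x by (simp add: U_def)
    define S where "S = sqrt (Q x)"
    have S: "S > 0" "S^2 = Q x" using Qx by (simp_all add: S_def)
    show "poly p1 x \<noteq> 0" using Qx Ux by (simp add: P1)
    have K2: "2 + K x > 0"
    proof -
      have "2 + K x = (x + 1/2)^2 + 7/4" by (simp add: K_def power2_eq_square algebra_simps)
      moreover have "0 \<le> (x + 1/2)^2" by simp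
      ultimately show ?thesis by linarith
    qed
    have lnU: "((\<lambda>x. ln (U x)) has_real_derivative inverse (U x) * 2) (at x)"
      by (rule DERIV_chain2[OF DERIV_ln[OF Ux] Ud])
    show "((\<lambda>x. - (real 2 * ln (U x) + real 3 * ln (sqrt (Q x)))) has_real_derivative
            - (poly q2 x + poly (pderiv p1) x) / poly p1 x) (at x)"
    proof (rule DERIV_cong[OF DERIV_minus[OF DERIV_add[OF DERIV_cmult[OF lnU] DERIV_cmult[OF has_real_derivative_ln_sqrt[OF Qd Qx]]]]])
      have num: "- 4 * Q x + 9/2 * (1 + 2 * x) * U x = 1/2 + 30 * x + 30 * x^2"
        by (simp add: Q_def U_def field_simps power2_eq_square)
      show "- (real 2 * (inverse (U x) * 2) + real 3 * ((- 3 - 6 * x) / (2 * Q x))) =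
            - (poly q2 x + poly (pderiv p1) x) / poly p1 x"
        unfolding P1 P1' num[symmetric] using Ux Qx by (simp add: field_simps)
    qed
    show "((\<lambda>x. K x / (U x * sqrt (Q x))) has_real_derivative (2 + K x) / (2 * (U x)^2 * (sqrt (Q x))^3)) (at x)"
    proof (rule DERIV_cong[OF has_real_derivative_quot_sqrt[OF Kd Ud Qd Qx]])
      show "U x \<noteq> 0" using Ux by simp
      have num: "(1 + 2 * x) * U x * Q x - K x * 2 * Q x - K x * U x * (- 3 - 6 * x) / 2 = (2 + K x) / 2"
        by (simp add: Q_def U_def K_def field_simps power2_eq_square power3_eq_cube)
      show "((1 + 2 * x) * U x * Q x - K x * 2 * Q x - K x * U x * (- 3 - 6 * x) / 2) / ((U x)^2 * Q x * sqrt (Q x))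
            = (2 + K x) / (2 * (U x)^2 * (sqrt (Q x))^3)"
        unfolding num unfolding S_def[symmetric] unfolding S(2)[symmetric] using S(1) Ux
        by (simp add: field_simps power2_eq_square power3_eq_cube)
    qed
    have e: "exp (- (real 2 * ln (U x) + real 3 * ln (sqrt (Q x)))) = 1 / ((U x)^2 * S^3)"
    proof -
      have "exp (- (real 2 * ln (U x) + real 3 * ln (sqrt (Q x)))) =
            exp (- (real 2 * ln (U x))) * exp (- (real 3 * ln (sqrt (Q x))))"
        by (simp only: minus_add_distrib exp_add)
      also have "\<dots> = 1 / (U x)^2 * (1 / S^3)"
        using exp_minus_of_nat_mult_ln[OF Ux, of 2] exp_minus_of_nat_mult_ln[of "sqrt (Q x)" 3] Qx by (simp add: S_def)
      finally show ?thesis by simp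
    qed
    have sq0: "(2 + K x)^2 = 4 * (U x)^2 * S^2 + 49 * (K x)^2"
      unfolding S(2) by (simp add: Q_def U_def K_def field_simps power2_eq_square)
    have sq: "sqrt (4 + 49 * (K x / (U x * sqrt (Q x)))^2) = (2 + K x) / (U x * S)"
    proof (rule real_sqrt_unique)
      show "((2 + K x) / (U x * S))^2 = 4 + 49 * (K x / (U x * sqrt (Q x)))^2"
        unfolding S_def[symmetric] using S(1) Ux sq0 by (simp add: power_divide field_simps)
      show "0 \<le> (2 + K x) / (U x * S)" using S(1) Ux K2 by simp
    qed
    have r: "1 + - (K x / (U x * S)) / ((2 + K x) / (U x * S)) = 2 / (2 + K x)"
      using S(1) Ux K2 by (simp add: field_simps)
    show "0 < (2 + K x) / (2 * (U x)^2 * (sqrt (Q x))^3)" using K2 Ux Qx by simp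
    show "(2 + K x) / (2 * (U x)^2 * (sqrt (Q x))^3) *
          (1 + - (K x / (U x * sqrt (Q x))) / sqrt (4 + 49 * (K x / (U x * sqrt (Q x)))^2)) =
          exp (- (real 2 * ln (U x) + real 3 * ln (sqrt (Q x))))"
      unfolding sq e unfolding S_def[symmetric] r using S(1) Ux K2 by (intro urabe_case_ii_identity_1) simp_all
    show "K x / (U x * sqrt (Q x)) =
          (1 + - (K x / (U x * sqrt (Q x))) / sqrt (4 + 49 * (K x / (U x * sqrt (Q x)))^2)) *
          (- poly p1 x * poly q0 x * exp (- (real 2 * ln (U x) + real 3 * ln (sqrt (Q x)))))"
      unfolding sq e P1 Q0 unfolding S_def[symmetric] r unfolding S(2)[symmetric]
      using S(1) Ux K2 by (intro urabe_case_ii_identity_2) simp_all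
  next
    show "(\<lambda>x. K x / (U x * sqrt (Q x))) 0 = 0" by (simp add: K_def)
  next
    show "(\<lambda>x. - (real 2 * ln (U x) + real 3 * ln (sqrt (Q x)))) 0 = 0" by (simp add: Q_def U_def)
  qed (use hp in \<open>auto simp: add.commute power2_eq_square\<close>)
  show ?thesis
    by (rule urabe_function_cong[OF urabe[OF han]]) (use V in simp)
qed

lemma urabe_case_iii:
  fixes a :: real
  shows "urabe_function
           (\<lambda>(x, y). (- y + x * y - (3 * a + 2/9) * x^2 * y + a * x^3 * y,
                       x + (1/9 - 3 * a) * x * y^2))
           (\<lambda>s. s / sqrt ((1 - 27 * a) * s^2 + 9))"
proof -
  define c where "c = 1 - 27 * a"
  define \<epsilon> where "\<epsilon> = 1 / (\<bar>c\<bar> + 1)"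
  have \<epsilon>: "\<epsilon> > 0" "\<epsilon> \<le> 1" by (auto simp: \<epsilon>_def)
  have ce: "\<bar>c\<bar> * \<epsilon>^2 \<le> 9 / 2"
  proof -
    have "\<bar>c\<bar> * \<epsilon> \<le> 1" by (simp add: \<epsilon>_def field_simps)
    moreover have "\<bar>c\<bar> * \<epsilon>^2 = (\<bar>c\<bar> * \<epsilon>) * \<epsilon>" by (simp add: power2_eq_square)
    ultimately have "\<bar>c\<bar> * \<epsilon>^2 \<le> 1 * 1" using \<epsilon> by (metis mult_mono abs_ge_zero mult_nonneg_nonneg order_less_imp_le zero_le_one)
    then show ?thesis by simp
  qed
  have me: "1^2 * \<epsilon>^2 < 9 / 2"
  proof -
    have "\<epsilon>^2 \<le> 1" using \<epsilon> by (simp add: power_le_one)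
    then show ?thesis by simp
  qed
  note hp = linear_over_sqrt_near_0[where k = 9 and \<epsilon> = \<epsilon> and c = c and m = 1, OF _ ce me, simplified]
  have hh: "(\<lambda>s::real. s / sqrt ((1 - 27 * a) * s^2 + 9)) = (\<lambda>s. 1 * s / sqrt (c * s^2 + 9))"
    by (simp add: c_def)
  have han: "odd_analytic_near_0 (\<lambda>s::real. s / sqrt ((1 - 27 * a) * s^2 + 9))"
    unfolding hh by (rule odd_analytic_near_0_linear_over_sqrt) simp
  define \<delta> where "\<delta> = 1 / (4 * (\<bar>a\<bar> + 1))"
  have \<delta>: "\<delta> > 0" "\<delta> \<le> 1/4" "\<bar>a\<bar> * \<delta> \<le> 1/4" by (auto simp: \<delta>_def field_simps)
  define Q where "Q = (\<lambda>x::real. 1 - 2/3 * x + 3 * a * x^2)"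
  have Qd: "(Q has_real_derivative (- 2/3 + 6 * a * x)) (at x)" for x
    unfolding Q_def by (auto intro!: derivative_eq_intros)
  have Qpos: "Q x > 0" and ux: "1 - x / 3 > 0" if "\<bar>x\<bar> < \<delta>" for x
  proof -
    have x: "\<bar>x\<bar> \<le> 1/4" using that \<delta> by linarith
    have "\<bar>3 * a * x^2\<bar> = 3 * (\<bar>a\<bar> * \<bar>x\<bar>) * \<bar>x\<bar>" by (simp add: abs_mult power2_eq_square)
    also have "\<dots> \<le> 3 * (\<bar>a\<bar> * \<delta>) * (1/4)"
      using that x by (intro mult_mono mult_left_mono) auto
    also have "\<dots> \<le> 3 * (1/4) * (1/4)" using \<delta>(3) by (simp add: mult.commute)
    finally have "\<bar>3 * a * x^2\<bar> \<le> 3/16" by simp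
    then show "Q x > 0" using x by (simp add: Q_def abs_le_iff)
    show "1 - x / 3 > 0" using x by simp
  qed
  define p1 :: "real poly" where "p1 = [:-1, 1, -(3 * a + 2/9), a:]"
  define q0 :: "real poly" where "q0 = [:0, 1:]"
  define q2 :: "real poly" where "q2 = [:0, 1/9 - 3 * a:]"
  have P1: "poly p1 x = - (1 - x / 3) * Q x" for x
    by (simp add: p1_def Q_def field_simps power2_eq_square power3_eq_cube)
  have dP1: "poly (pderiv p1) x = 1 - 2 * (3 * a + 2/9) * x + 3 * a * x^2" for x
    by (simp add: p1_def pderiv_pCons algebra_simps power2_eq_square)
  have Q0: "poly q0 x = x" for x by (simp add: q0_def)
  have Q2: "poly q2 x = (1/9 - 3 * a) * x" for x by (simp add: q2_def)
  have V: "\<And>x y. (case (x, y) of (x, y) \<Rightarrow> (- y + x * y - (3 * a + 2/9) * x^2 * y + a * x^3 * y,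
                       x + (1/9 - 3 * a) * x * y^2)) =
        (poly p1 x * y, poly q0 x + poly q2 x * y^2)"
    by (simp add: P1 Q0 Q2 Q_def field_simps power2_eq_square power3_eq_cube)
  interpret urabe_normal_form p1 q0 q2 "\<lambda>x. - (real 3 * ln (sqrt (Q x)))" "\<lambda>x. x / sqrt (Q x)"
      "\<lambda>x. (1 - x / 3) / (sqrt (Q x))^3"
      "\<lambda>s. s / sqrt ((1 - 27 * a) * s^2 + 9)" \<delta> \<epsilon>
  proof
    show "0 < \<delta>" by (rule \<delta>(1))
    show "0 < \<epsilon>" by (rule \<epsilon>(1))
    fix x :: real assume x: "\<bar>x\<bar> < \<delta>"
    note Qx = Qpos[OF x] and u = ux[OF x]
    define S where "S = sqrt (Q x)"
    have S: "S > 0" "S^2 = Q x" using Qx by (simp_all add: S_def)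
    show "poly p1 x \<noteq> 0" using u Qx by (simp add: P1)
    show "((\<lambda>x. - (real 3 * ln (sqrt (Q x)))) has_real_derivative
            - (poly q2 x + poly (pderiv p1) x) / poly p1 x) (at x)"
    proof (rule DERIV_cong[OF DERIV_minus[OF DERIV_cmult[OF has_real_derivative_ln_sqrt[OF Qd Qx]]]])
      show "- (real 3 * ((- 2/3 + 6 * a * x) / (2 * Q x))) = - (poly q2 x + poly (pderiv p1) x) / poly p1 x"
      proof -
        have N: "poly q2 x + poly (pderiv p1) x = (1 - 9 * a * x) * (1 - x / 3)"
          unfolding Q2 dP1 by (simp add: field_simps power2_eq_square)
        have "- (poly q2 x + poly (pderiv p1) x) / poly p1 x = (1 - 9 * a * x) / Q x"
          unfolding N P1 using u Qx by (simp add: field_simps)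
        moreover have "- (real 3 * ((- 2/3 + 6 * a * x) / (2 * Q x))) = (1 - 9 * a * x) / Q x"
          using Qx by (simp add: field_simps)
        ultimately show ?thesis by simp
      qed
    qed
    show "((\<lambda>x. x / sqrt (Q x)) has_real_derivative (1 - x / 3) / (sqrt (Q x))^3) (at x)"
    proof (rule DERIV_cong[OF has_real_derivative_div_sqrt[OF Qd Qx]])
      show "(2 * Q x - x * (- 2/3 + 6 * a * x)) / (2 * Q x * sqrt (Q x)) = (1 - x / 3) / (sqrt (Q x))^3"
      proof -
        have num: "2 * Q x - x * (- 2/3 + 6 * a * x) = 2 * (1 - x / 3)"
          by (simp add: Q_def field_simps power2_eq_square)
        show ?thesis unfolding num unfolding S_def[symmetric] unfolding S(2)[symmetric] using S(1)
          by (simp add: field_simps power2_eq_square power3_eq_cube)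
      qed
    qed
    have e: "exp (- (real 3 * ln (sqrt (Q x)))) = 1 / S^3"
      unfolding S_def by (rule exp_minus_of_nat_mult_ln) (use Qx in simp)
    have sq0: "(3 - x)^2 = (1 - 27 * a) * x^2 + 9 * S^2"
      unfolding S(2) Q_def by (simp add: field_simps power2_eq_square)
    have sq: "sqrt ((1 - 27 * a) * (x / sqrt (Q x))^2 + 9) = (3 - x) / S"
    proof (rule real_sqrt_unique)
      show "((3 - x) / S)^2 = (1 - 27 * a) * (x / sqrt (Q x))^2 + 9"
        unfolding S_def[symmetric] using S(1) sq0 by (simp add: power_divide field_simps)
      show "0 \<le> (3 - x) / S" using S(1) u by simp
    qed
    have r: "1 + x / S / ((3 - x) / S) = 3 / (3 - x)" using S(1) u by (simp add: field_simps)
    show "0 < (1 - x / 3) / (sqrt (Q x))^3" using u Qx by simp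
    show "(1 - x / 3) / (sqrt (Q x))^3 * (1 + x / sqrt (Q x) / sqrt ((1 - 27 * a) * (x / sqrt (Q x))^2 + 9))
          = exp (- (real 3 * ln (sqrt (Q x))))"
      unfolding sq e unfolding S_def[symmetric] r using S(1) u by (simp add: field_simps)
    show "x / sqrt (Q x) = (1 + x / sqrt (Q x) / sqrt ((1 - 27 * a) * (x / sqrt (Q x))^2 + 9)) *
          (- poly p1 x * poly q0 x * exp (- (real 3 * ln (sqrt (Q x)))))"
      unfolding sq e P1 Q0 unfolding S_def[symmetric] r unfolding S(2)[symmetric]
      using S(1) u by (simp add: field_simps power2_eq_square power3_eq_cube)
  next
    show "(\<lambda>x. x / sqrt (Q x)) 0 = 0" by simp
  next
    show "(\<lambda>x. - (real 3 * ln (sqrt (Q x)))) 0 = 0" by (simp add: Q_def)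
  qed (use hp in \<open>auto simp: c_def\<close>)
  show ?thesis
    by (rule urabe_function_cong[OF urabe[OF han]]) (use V in simp)
qed

lemma urabe_case_iv_identities:
  fixes u w :: real
  assumes u: "0 < u" and w: "w = 1 + u^2"
  shows "sqrt (((1 - u^2) / (2 * u))^2 + 1) = w / (2 * u)"
    and "w / (2 * u^2) * (1 + (1 - u^2) / (2 * u) / (w / (2 * u))) = 1 / u^2"
    and "(1 - u^2) / (2 * u) = (1 + (1 - u^2) / (2 * u) / (w / (2 * u))) * (u * ((1 - u^4) / 4) * (1 / u^2))"
proof -
  have "0 < w"
    using w by (simp add: add_pos_nonneg)
  then have nz: "w \<noteq> 0" "u \<noteq> 0"
    using u by simp_all
  show "sqrt (((1 - u^2) / (2 * u))^2 + 1) = w / (2 * u)"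
    by (rule real_sqrt_unique) (use u \<open>0 < w\<close> w in \<open>simp_all add: field_simps power2_eq_square\<close>)
  have ratio: "1 + (1 - u^2) / (2 * u) / (w / (2 * u)) = 2 / w"
    using nz by (simp add: field_simps) (simp add: w algebra_simps power2_eq_square)
  show "w / (2 * u^2) * (1 + (1 - u^2) / (2 * u) / (w / (2 * u))) = 1 / u^2"
    unfolding ratio using nz by (simp add: field_simps)
  show "(1 - u^2) / (2 * u) = (1 + (1 - u^2) / (2 * u) / (w / (2 * u))) * (u * ((1 - u^4) / 4) * (1 / u^2))"
    unfolding ratio using nz
    by (simp add: field_simps) (simp add: w algebra_simps power2_eq_square power4_eq_xxxx)
qed

lemma urabe_case_iv:
  "urabe_function (\<lambda>(x, y). (- y + x * y, x - 3/2 * x^2 + y^2 + x^3 - 1/4 * x^4))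
     (\<lambda>s. s / sqrt (1 + s^2))"
proof -
  define h where "h s = 1 * s / sqrt (1 * s^2 + 1)" for s :: real
  define F where "F x = - (2 * ln (1 - x))" for x :: real
  define \<xi> where "\<xi> x = (1 - (1 - x)^2) / (2 * (1 - x))" for x :: real
  define \<xi>' where "\<xi>' x = (1 + (1 - x)^2) / (2 * (1 - x)^2)" for x :: real
  have \<xi>_deriv: "((\<lambda>u. (1 - u^2) / (2 * u)) has_real_derivative - ((1 + u^2) / (2 * u^2))) (at u)"
    if "u \<noteq> 0" for u :: real
    using that by (auto intro!: derivative_eq_intros simp: field_simps power2_eq_square)
  interpret urabe_normal_form "[:-1, 1:]" "[:0, 1, -3/2, 1, -1/4:]" "[:1:]" F \<xi> \<xi>' h "1/2" "1/2"
  proof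
    fix x :: real assume "\<bar>x\<bar> < 1/2"
    then have u: "0 < 1 - x" by simp
    show "poly [:-1, 1:] x \<noteq> 0"
      using u by simp
    show "(F has_real_derivative - (poly [:1:] x + poly (pderiv [:-1, 1:]) x) / poly [:-1, 1:] x) (at x)"
      using u unfolding F_def by (auto intro!: derivative_eq_intros simp: pderiv_pCons field_simps)
    have "((\<lambda>x. 1 - x) has_real_derivative -1) (at x)"
      by (auto intro!: derivative_eq_intros)
    from DERIV_chain2[OF \<xi>_deriv this] u
    show "(\<xi> has_real_derivative \<xi>' x) (at x)"
      unfolding \<xi>_def[abs_def] \<xi>'_def by simp
    show "0 < \<xi>' x"
      using u by (simp add: \<xi>'_def add_pos_nonneg)
    have "exp (2 * ln (1 - x)) = (1 - x)^2"
      using exp_of_nat_mult_ln[OF u, of 2] by simp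
    then have exp_F: "exp (F x) = 1 / (1 - x)^2"
      by (simp add: F_def exp_minus inverse_eq_divide)
    have p1: "- poly [:-1, 1:] x = 1 - x"
      by simp
    have q0: "poly [:0, 1, -3/2, 1, -1/4:] x = (1 - (1 - x)^4) / 4"
      by (simp add: algebra_simps power2_eq_square power3_eq_cube power4_eq_xxxx)
    note identities = urabe_case_iv_identities[OF u refl]
    show "\<xi>' x * (1 + h (\<xi> x)) = exp (F x)"
      unfolding h_def \<xi>_def \<xi>'_def mult_1_left identities(1) exp_F by (rule identities(2))
    show "\<xi> x = (1 + h (\<xi> x)) * (- poly [:-1, 1:] x * poly [:0, 1, -3/2, 1, -1/4:] x * exp (F x))"
      unfolding h_def \<xi>_def mult_1_left identities(1) exp_F p1 q0 by (rule identities(3))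
  next
    note hp = linear_over_sqrt_near_0[where k = 1 and \<epsilon> = "1/2" and c = 1 and m = 1, simplified]
    show "continuous_on {- (1/2)<..<1/2} h"
      using hp(2) by (simp add: h_def[abs_def] power2_eq_square)
    show "0 < 1 + h s" if "\<bar>s\<bar> < 1/2" for s
      using hp(1)[of s] that by (simp add: h_def power2_eq_square)
  qed (simp_all add: F_def \<xi>_def h_def)
  have "h = (\<lambda>s. s / sqrt (1 + s^2))"
    by (simp add: h_def fun_eq_iff add.commute)
  moreover have "odd_analytic_near_0 h"
    unfolding h_def by (rule odd_analytic_near_0_linear_over_sqrt) simp
  ultimately have "urabe_function
      (\<lambda>(x, y). (poly [:-1, 1:] x * y, poly [:0, 1, -3/2, 1, -1/4:] x + poly [:1:] x * y^2))
      (\<lambda>s. s / sqrt (1 + s^2))"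
    using urabe by simp
  then show ?thesis
    by (rule urabe_function_cong) (simp add: algebra_simps power2_eq_square power3_eq_cube power4_eq_xxxx)
qed

theorem mainTheorem2:
  shows "urabe_function
           (\<lambda>(x, y). (- y + x * y - 1/2 * x^2 * y + 1/8 * x^3 * y,
                       x - 3/4 * x^2 + 1/4 * y^2 + 5/24 * x^3 + 3/8 * x * y^2
                         - 1/16 * x^2 * y^2 - 1/48 * x^4))
           (\<lambda>s. 3 * s / sqrt (16 + 9 * s^2)) \<and>
         urabe_function
           (\<lambda>(x, y). (- y + x * y + 9 * x^2 * y + 6 * x^3 * y,
                       x + 3/2 * x^2 - 1/2 * y^2 + x^3 + 12 * x * y^2
                         + 12 * x^2 * y^2 + 1/2 * x^4))
           (\<lambda>s. - s / sqrt (4 + 49 * s^2)) \<and>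
         (\<forall>a31 :: real. urabe_function
           (\<lambda>(x, y). (- y + x * y - (3 * a31 + 2/9) * x^2 * y + a31 * x^3 * y,
                       x + (1/9 - 3 * a31) * x * y^2))
           (\<lambda>s. s / sqrt ((1 - 27 * a31) * s^2 + 9))) \<and>
         urabe_function
           (\<lambda>(x, y). (- y + x * y,
                       x - 3/2 * x^2 + y^2 + x^3 - 1/4 * x^4))
           (\<lambda>s. s / sqrt (1 + s^2))"
  by (intro conjI allI urabe_case_i urabe_case_ii urabe_case_iii urabe_case_iv)

end
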